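(* Let $\sigma$ be a partial action of a locally compact Hausdorff group $G$ on a locally compact Hausdorff space $X$. Consider the conditions: (P1) for every pair of compact sets $L,M\subseteq X$, the set $((L,M)):=\{t\in G:\sigma_t(L\cap X_{t^{-1}})\cap M\neq\emptyset\}$ has compact closure; (P2) for every pair of compact sets $L,M\subseteq X$, the set $((L,M))$ is compact; (P3) the map $F_\sigma\colon\Gamma_\sigma\to X\times X$, $(t,x)\mapsto(\sigma_t(x),x)$, is proper. Then (P3)$\Rightarrow$(P2)$\Rightarrow$(P1), but none of the converse implications holds in general.
   Context: A topological partial action $\sigma=(\{X_t\}_{t\in G},\{\sigma_t\}_{t\in G})$ of $G$ on $X$: open sets $X_t\subseteq X$ and homeomorphisms $\sigma_t\colon X_{t^{-1}}\to X_t$ with $X_e=X$, $\sigma_e=\mathrm{id}$, $\sigma_s(X_{s^{-1}}\cap X_t)=X_s\cap X_{st}$, $\sigma_s\sigma_t=\sigma_{st}$ on $X_{t^{-1}}\cap X_{t^{-1}s^{-1}}$, such that $\Gamma_\sigma:=\{(t,x)\in G\times X:x\in X_{t^{-1}}\}$ is open in $G\times X$ and $(t,x)\mapsto\sigma_t(x)$ is continuous on $\Gamma_\sigma$. A map is proper if preimages of compact sets are compact. *)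

theory Defs
  imports "HOL-Analysis.Analysis" "HOL-Algebra.Group"
begin

definition topological_group :: "('g, 'm) monoid_scheme \<Rightarrow> 'g topology \<Rightarrow> bool" where
  "topological_group G TG \<longleftrightarrow>
     group G \<and> topspace TG = carrier G \<and>
     continuous_map (prod_topology TG TG) TG (\<lambda>(a, b). a \<otimes>\<^bsub>G\<^esub> b) \<and>
     continuous_map TG TG (\<lambda>a. inv\<^bsub>G\<^esub> a)"

definition lc_hausdorff :: "'a topology \<Rightarrow> bool" where
  "lc_hausdorff T \<longleftrightarrow> Hausdorff_space T \<and> locally_compact_space T"

definition pa_Gamma :: "('g, 'm) monoid_scheme \<Rightarrow> ('g \<Rightarrow> 'x set) \<Rightarrow> ('g \<times> 'x) set" where
  "pa_Gamma G D = {(t, x). t \<in> carrier G \<and> x \<in> D (inv\<^bsub>G\<^esub> t)}"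

text \<open>Topological partial action of G on X: D t is the open set X_t, s t is sigma_t.\<close>
definition topological_partial_action ::
  "('g, 'm) monoid_scheme \<Rightarrow> 'g topology \<Rightarrow> 'x topology \<Rightarrow> ('g \<Rightarrow> 'x set) \<Rightarrow> ('g \<Rightarrow> 'x \<Rightarrow> 'x) \<Rightarrow> bool" where
  "topological_partial_action G TG X D s \<longleftrightarrow>
     (\<forall>t\<in>carrier G. openin X (D t)) \<and>
     (\<forall>t\<in>carrier G. homeomorphic_map (subtopology X (D (inv\<^bsub>G\<^esub> t))) (subtopology X (D t)) (s t)) \<and>
     D \<one>\<^bsub>G\<^esub> = topspace X \<and>
     (\<forall>x\<in>topspace X. s \<one>\<^bsub>G\<^esub> x = x) \<and>
     (\<forall>a\<in>carrier G. \<forall>t\<in>carrier G.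
        s a ` (D (inv\<^bsub>G\<^esub> a) \<inter> D t) = D a \<inter> D (a \<otimes>\<^bsub>G\<^esub> t)) \<and>
     (\<forall>a\<in>carrier G. \<forall>t\<in>carrier G.
        \<forall>x \<in> D (inv\<^bsub>G\<^esub> t) \<inter> D (inv\<^bsub>G\<^esub> t \<otimes>\<^bsub>G\<^esub> inv\<^bsub>G\<^esub> a).
          s a (s t x) = s (a \<otimes>\<^bsub>G\<^esub> t) x) \<and>
     openin (prod_topology TG X) (pa_Gamma G D) \<and>
     continuous_map (subtopology (prod_topology TG X) (pa_Gamma G D)) X (\<lambda>(t, x). s t x)"

definition pa_LM :: "('g, 'm) monoid_scheme \<Rightarrow> ('g \<Rightarrow> 'x set) \<Rightarrow> ('g \<Rightarrow> 'x \<Rightarrow> 'x) \<Rightarrow> 'x set \<Rightarrow> 'x set \<Rightarrow> 'g set" where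
  "pa_LM G D s L M = {t \<in> carrier G. s t ` (L \<inter> D (inv\<^bsub>G\<^esub> t)) \<inter> M \<noteq> {}}"

definition proper_on :: "'a topology \<Rightarrow> 'b topology \<Rightarrow> ('a \<Rightarrow> 'b) \<Rightarrow> bool" where
  "proper_on A B f \<longleftrightarrow> (\<forall>K. compactin B K \<longrightarrow> compactin A {a \<in> topspace A. f a \<in> K})"

definition pa_P1 where
  "pa_P1 G TG X D s \<longleftrightarrow> (\<forall>L M. compactin X L \<and> compactin X M \<longrightarrow>
      compactin TG (TG closure_of (pa_LM G D s L M)))"

definition pa_P2 where
  "pa_P2 G TG X D s \<longleftrightarrow> (\<forall>L M. compactin X L \<and> compactin X M \<longrightarrow>
      compactin TG (pa_LM G D s L M))"

definition pa_P3 where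
  "pa_P3 G TG X D s \<longleftrightarrow>
     proper_on (subtopology (prod_topology TG X) (pa_Gamma G D)) (prod_topology X X)
       (\<lambda>(t, x). (s t x, x))"

end

theory Submission
  imports Defs
begin

(*
  The set ((L,M)) is the projection to G of F_sigma^-1(M x L), so (P3) gives (P2); compact
  subsets of the Hausdorff group G are closed, so (P2) gives (P1).

  For (P1) without (P2), let R act on the punctured plane by horizontal translation, where a
  point of the horizontal axis may only be translated as long as it does not pass the origin.
  Every ((L,M)) lies in the bounded set of differences of first coordinates, but for
  L = {-1} x [0,1] and M the segment from (1,0) to (2,1) it is the interval (2,3]: translating
  (-1,0) by 2 would cross the origin.  For (P2) without (P3), let {-1,1} act on R with -1
  acting as x |-> -x on R - {0} only.  The group is finite, so (P2) is trivial, but the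
  preimage under F_sigma of [-1,0] x [0,1] contains {-1} x (0,1].

  Since the spaces must have real points, the punctured plane is replaced by a homeomorphic
  copy along an injection R x R -> R; the properties (P1), (P2) and being a partial action
  are invariant under such conjugation.
*)

lemma not_compact_greaterThanAtMost:
  fixes a b :: "'a::{linorder_topology, dense_order}"
  assumes "a < b"
  shows "\<not> compact {a<..b}"
proof
  assume "compact {a<..b}"
  then have "{a..b} = {a<..b}"
    using assms by (metis closure_closed closure_greaterThanAtMost compact_imp_closed)
  then show False
    using assms by (metis atLeastAtMost_iff greaterThanAtMost_iff less_irrefl order_refl less_imp_le)
qed

lemma lc_hausdorff_euclidean: "lc_hausdorff (euclidean :: 'a::heine_borel topology)"
  by (simp add: lc_hausdorff_def locally_compact_space_euclidean)

lemma lc_hausdorff_discrete_topology: "lc_hausdorff (discrete_topology U)"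
  by (simp add: lc_hausdorff_def locally_compact_space_discrete_topology)

lemma lc_hausdorff_homeomorphic_space:
  "X homeomorphic_space Y \<Longrightarrow> lc_hausdorff X \<longleftrightarrow> lc_hausdorff Y"
  unfolding lc_hausdorff_def
  using homeomorphic_Hausdorff_space homeomorphic_locally_compact_space by blast

lemma pa_dom_subset_topspace:
  assumes "topological_partial_action G TG X D s" "t \<in> carrier G"
  shows "D t \<subseteq> topspace X"
  using assms openin_subset unfolding topological_partial_action_def by blast

lemma pa_maps_dom:
  assumes tpa: "topological_partial_action G TG X D s" and "group G"
    and t: "t \<in> carrier G" and x: "x \<in> D (inv\<^bsub>G\<^esub> t)"
  shows "s t x \<in> D t"
proof -
  have "continuous_map (subtopology X (D (inv\<^bsub>G\<^esub> t))) (subtopology X (D t)) (s t)"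
    using tpa t homeomorphic_imp_continuous_map unfolding topological_partial_action_def by blast
  then have "s t \<in> topspace X \<inter> D (inv\<^bsub>G\<^esub> t) \<rightarrow> topspace X \<inter> D t"
    by (metis continuous_map_funspace topspace_subtopology)
  moreover have "x \<in> topspace X"
    using pa_dom_subset_topspace[OF tpa] x t \<open>group G\<close> by (auto dest: group.inv_closed)
  ultimately show ?thesis
    using x by auto
qed

lemma pa_LM_iff:
  "t \<in> pa_LM G D s L M \<longleftrightarrow> t \<in> carrier G \<and> (\<exists>x \<in> L \<inter> D (inv\<^bsub>G\<^esub> t). s t x \<in> M)"
  unfolding pa_LM_def by blast

lemma pa_LM_eq_image_fst:
  assumes "topspace TG = carrier G" "L \<subseteq> topspace X"
  shows "pa_LM G D s L M =
           fst ` {a \<in> topspace (subtopology (prod_topology TG X) (pa_Gamma G D)).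
                    (\<lambda>(t, x). (s t x, x)) a \<in> M \<times> L}"
proof (intro equalityI subsetI)
  fix t assume "t \<in> pa_LM G D s L M"
  then obtain x where "t \<in> carrier G" "x \<in> L" "x \<in> D (inv\<^bsub>G\<^esub> t)" "s t x \<in> M"
    unfolding pa_LM_def by blast
  with assms show "t \<in> fst ` {a \<in> topspace (subtopology (prod_topology TG X) (pa_Gamma G D)).
                    (\<lambda>(t, x). (s t x, x)) a \<in> M \<times> L}"
    by (intro image_eqI[of t fst "(t, x)"]) (auto simp: pa_Gamma_def)
qed (fastforce simp: pa_LM_def pa_Gamma_def)

lemma pa_P3_imp_P2:
  assumes "pa_P3 G TG X D s" "topspace TG = carrier G"
  shows "pa_P2 G TG X D s"
  unfolding pa_P2_def
proof (intro allI impI)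
  fix L M assume LM: "compactin X L \<and> compactin X M"
  let ?\<Gamma> = "subtopology (prod_topology TG X) (pa_Gamma G D)"
  have "compactin ?\<Gamma> {a \<in> topspace ?\<Gamma>. (\<lambda>(t, x). (s t x, x)) a \<in> M \<times> L}"
    using assms(1) LM unfolding pa_P3_def proper_on_def by (simp add: compactin_Times)
  then have "compactin TG (fst ` {a \<in> topspace ?\<Gamma>. (\<lambda>(t, x). (s t x, x)) a \<in> M \<times> L})"
    by (rule image_compactin) (simp add: continuous_map_from_subtopology continuous_map_fst)
  moreover have "L \<subseteq> topspace X"
    using LM compactin_subset_topspace by blast
  ultimately show "compactin TG (pa_LM G D s L M)"
    by (simp add: pa_LM_eq_image_fst[OF assms(2)])
qed

lemma pa_P2_imp_P1:
  assumes "pa_P2 G TG X D s" "Hausdorff_space TG"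
  shows "pa_P1 G TG X D s"
  using assms unfolding pa_P2_def pa_P1_def
  by (metis closure_of_eq compactin_imp_closedin)

lemma pa_P3_imp_compactin_slice:
  assumes P3: "pa_P3 G TG X D s" and "Hausdorff_space TG" "topspace TG = carrier G"
    and t: "t \<in> carrier G" and L: "compactin X L" and M: "compactin X M"
  shows "compactin X {x \<in> L \<inter> D (inv\<^bsub>G\<^esub> t). s t x \<in> M}"
proof -
  let ?\<Gamma> = "subtopology (prod_topology TG X) (pa_Gamma G D)"
  let ?P = "{a \<in> topspace ?\<Gamma>. (\<lambda>(t, x). (s t x, x)) a \<in> M \<times> L}"
  have "compactin ?\<Gamma> ?P"
    using P3 L M unfolding pa_P3_def proper_on_def by (simp add: compactin_Times)
  then have "compactin (prod_topology TG X) ?P"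
    by (simp add: compactin_subtopology)
  moreover have "closedin (prod_topology TG X) ({t} \<times> topspace X)"
    using assms by (simp add: closedin_prod_Times_iff closedin_Hausdorff_singleton)
  ultimately have "compactin X (snd ` (({t} \<times> topspace X) \<inter> ?P))"
    using closed_Int_compactin image_compactin continuous_map_snd by blast
  moreover have "snd ` (({t} \<times> topspace X) \<inter> ?P) = {x \<in> L \<inter> D (inv\<^bsub>G\<^esub> t). s t x \<in> M}"
  proof (intro equalityI subsetI)
    fix x assume "x \<in> {x \<in> L \<inter> D (inv\<^bsub>G\<^esub> t). s t x \<in> M}"
    with assms compactin_subset_topspace[OF L] show "x \<in> snd ` (({t} \<times> topspace X) \<inter> ?P)"
      by (intro image_eqI[of x snd "(t, x)"]) (auto simp: pa_Gamma_def)
  qed (auto simp: pa_Gamma_def)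
  ultimately show ?thesis
    by simp
qed

lemma homeomorphic_map_conjugate:
  assumes hm: "homeomorphic_maps Z X j k"
    and f: "homeomorphic_map (subtopology Z A) (subtopology Z B) f"
    and A: "A \<subseteq> topspace Z" and B: "B \<subseteq> topspace Z"
  shows "homeomorphic_map (subtopology X (j ` A)) (subtopology X (j ` B)) (\<lambda>x. j (f (k x)))"
proof -
  have hj: "homeomorphic_map Z X j" and hk: "homeomorphic_map X Z k"
    using hm homeomorphic_map_maps homeomorphic_maps_sym by blast+
  have kj: "\<And>z. z \<in> topspace Z \<Longrightarrow> k (j z) = z" and jk: "\<And>x. x \<in> topspace X \<Longrightarrow> j (k x) = x"
    using hm by (simp_all add: homeomorphic_maps_def)
  have hk': "homeomorphic_map (subtopology X (j ` A)) (subtopology Z A) k"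
  proof (rule homeomorphic_map_subtopologies_alt[OF hk])
    fix x assume "x \<in> topspace X"
    then show "k x \<in> A \<longleftrightarrow> x \<in> j ` A"
      using A jk kj by (metis imageE image_eqI subsetD)
  qed
  have hj': "homeomorphic_map (subtopology Z B) (subtopology X (j ` B)) j"
  proof (rule homeomorphic_map_subtopologies_alt[OF hj])
    fix z assume "z \<in> topspace Z"
    then show "j z \<in> j ` B \<longleftrightarrow> z \<in> B"
      using B kj by (metis imageE image_eqI subsetD)
  qed
  have "homeomorphic_map (subtopology X (j ` A)) (subtopology X (j ` B)) (j \<circ> (f \<circ> k))"
    by (rule homeomorphic_map_compose[OF homeomorphic_map_compose[OF hk' f] hj'])
  then show ?thesis
    by (simp add: comp_def)
qed

lemma pa_Gamma_image:
  "pa_Gamma G (\<lambda>t. j ` D t) = (\<lambda>(t, z). (t, j z)) ` pa_Gamma G D"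
  unfolding pa_Gamma_def by auto

context
  fixes G :: "('g, 'm) monoid_scheme" and TG :: "'g topology"
    and Z :: "'z topology" and X :: "'x topology" and j :: "'z \<Rightarrow> 'x" and k :: "'x \<Rightarrow> 'z"
    and D :: "'g \<Rightarrow> 'z set" and s :: "'g \<Rightarrow> 'z \<Rightarrow> 'z"
  assumes hm: "homeomorphic_maps Z X j k" and grp: "group G"
    and tpa: "topological_partial_action G TG Z D s"
begin

private lemma kj: "z \<in> topspace Z \<Longrightarrow> k (j z) = z"
  and jk: "x \<in> topspace X \<Longrightarrow> j (k x) = x"
  and k_topspace: "x \<in> topspace X \<Longrightarrow> k x \<in> topspace Z"
  and inj_j: "inj_on j (topspace Z)"
  using hm by (auto simp: homeomorphic_maps_def continuous_map_def intro: inj_on_inverseI)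

private lemma dom_subset: "t \<in> carrier G \<Longrightarrow> D t \<subseteq> topspace Z"
  using pa_dom_subset_topspace[OF tpa] .

private lemma mem_conj_dom: "z \<in> topspace Z \<Longrightarrow> t \<in> carrier G \<Longrightarrow> j z \<in> j ` D t \<longleftrightarrow> z \<in> D t"
  using inj_on_image_mem_iff[OF inj_j] dom_subset by blast

private lemma conj_dom_Int:
  "a \<in> carrier G \<Longrightarrow> b \<in> carrier G \<Longrightarrow> j ` D a \<inter> j ` D b = j ` (D a \<inter> D b)"
  using inj_on_image_Int[OF inj_j] dom_subset by blast

private lemma conj_image_Int:
  assumes a: "a \<in> carrier G" and t: "t \<in> carrier G"
  shows "(\<lambda>x. j (s a (k x))) ` (j ` D (inv\<^bsub>G\<^esub> a) \<inter> j ` D t) = j ` D a \<inter> j ` D (a \<otimes>\<^bsub>G\<^esub> t)"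
proof -
  have conj_image: "(\<lambda>x. j (s a (k x))) ` (j ` C) = j ` (s a ` C)" if "C \<subseteq> topspace Z" for C
    unfolding image_image by (rule image_cong) (use that kj in auto)
  have "(\<lambda>x. j (s a (k x))) ` (j ` D (inv\<^bsub>G\<^esub> a) \<inter> j ` D t) = j ` (s a ` (D (inv\<^bsub>G\<^esub> a) \<inter> D t))"
    using a t grp dom_subset[OF t] by (simp add: conj_dom_Int group.inv_closed conj_image le_infI2)
  also have "\<dots> = j ` (D a \<inter> D (a \<otimes>\<^bsub>G\<^esub> t))"
    using tpa a t by (simp add: topological_partial_action_def)
  finally show ?thesis
    using a t grp by (simp add: conj_dom_Int group.is_monoid monoid.m_closed)
qed

private lemma conj_action_compose:
  assumes a: "a \<in> carrier G" and t: "t \<in> carrier G"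
    and x: "x \<in> j ` D (inv\<^bsub>G\<^esub> t) \<inter> j ` D (inv\<^bsub>G\<^esub> t \<otimes>\<^bsub>G\<^esub> inv\<^bsub>G\<^esub> a)"
  shows "j (s a (k (j (s t (k x))))) = j (s (a \<otimes>\<^bsub>G\<^esub> t) (k x))"
proof -
  have it: "inv\<^bsub>G\<^esub> t \<in> carrier G" and ita: "inv\<^bsub>G\<^esub> t \<otimes>\<^bsub>G\<^esub> inv\<^bsub>G\<^esub> a \<in> carrier G"
    using grp a t by (auto simp: group.inv_closed group.is_monoid monoid.m_closed)
  obtain z where z: "z \<in> D (inv\<^bsub>G\<^esub> t)" "x = j z"
    using x by blast
  then have "z \<in> topspace Z" "z \<in> D (inv\<^bsub>G\<^esub> t \<otimes>\<^bsub>G\<^esub> inv\<^bsub>G\<^esub> a)"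
    using x dom_subset[OF it] mem_conj_dom[OF _ ita] by auto
  moreover have "s t z \<in> topspace Z"
    using pa_maps_dom[OF tpa grp t z(1)] dom_subset[OF t] by blast
  ultimately show ?thesis
    using tpa a t z kj by (simp add: topological_partial_action_def)
qed

private lemma openin_conj_Gamma: "openin (prod_topology TG X) (pa_Gamma G (\<lambda>t. j ` D t))"
proof -
  have "homeomorphic_map (prod_topology TG Z) (prod_topology TG X) (\<lambda>(t, z). (t, j z))"
    using hm homeomorphic_maps_prod[of TG Z TG X id j id k] homeomorphic_maps_id homeomorphic_map_maps
    by fastforce
  then show ?thesis
    using tpa homeomorphic_imp_open_map
    by (fastforce simp: topological_partial_action_def pa_Gamma_image open_map_def)
qed

private lemma continuous_map_conj_Gamma:
  "continuous_map (subtopology (prod_topology TG X) (pa_Gamma G (\<lambda>t. j ` D t)))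
     (subtopology (prod_topology TG Z) (pa_Gamma G D)) (\<lambda>(t, x). (t, k x))"
proof (rule continuous_map_into_subtopology)
  show "continuous_map (subtopology (prod_topology TG X) (pa_Gamma G (\<lambda>t. j ` D t)))
          (prod_topology TG Z) (\<lambda>(t, x). (t, k x))"
  proof (intro continuous_map_from_subtopology)
    have "continuous_map X Z k"
      using hm by (simp add: homeomorphic_maps_def)
    then show "continuous_map (prod_topology TG X) (prod_topology TG Z) (\<lambda>(t, x). (t, k x))"
      using continuous_map_compose[OF continuous_map_snd]
      by (simp add: continuous_map_pairwise o_def split_def continuous_map_fst)
  qed
  show "(\<lambda>(t, x). (t, k x)) \<in> topspace (subtopology (prod_topology TG X) (pa_Gamma G (\<lambda>t. j ` D t)))
          \<rightarrow> pa_Gamma G D"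
  proof
    fix a assume "a \<in> topspace (subtopology (prod_topology TG X) (pa_Gamma G (\<lambda>t. j ` D t)))"
    then obtain t z where a: "a = (t, j z)" "t \<in> carrier G" "z \<in> D (inv\<^bsub>G\<^esub> t)"
      by (auto simp: pa_Gamma_def)
    moreover have "k (j z) = z"
      using a grp dom_subset kj by (meson group.inv_closed subsetD)
    ultimately show "(\<lambda>(t, x). (t, k x)) a \<in> pa_Gamma G D"
      by (simp add: pa_Gamma_def)
  qed
qed

lemma topological_partial_action_conjugate:
  "topological_partial_action G TG X (\<lambda>t. j ` D t) (\<lambda>t x. j (s t (k x)))"
  unfolding topological_partial_action_def
proof (intro conjI ballI)
  note T = tpa[unfolded topological_partial_action_def]
  have hj: "homeomorphic_map Z X j"
    using hm homeomorphic_map_maps by blast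
  show "openin X (j ` D t)" if "t \<in> carrier G" for t
    using T that homeomorphic_imp_open_map[OF hj] by (auto simp: open_map_def)
  show "homeomorphic_map (subtopology X (j ` D (inv\<^bsub>G\<^esub> t))) (subtopology X (j ` D t))
          (\<lambda>x. j (s t (k x)))" if "t \<in> carrier G" for t
    using T that grp by (intro homeomorphic_map_conjugate[OF hm] dom_subset) auto
  show "j ` D \<one>\<^bsub>G\<^esub> = topspace X"
    using T hj homeomorphic_imp_surjective_map by metis
  show "j (s \<one>\<^bsub>G\<^esub> (k x)) = x" if "x \<in> topspace X" for x
    using T that k_topspace jk by simp
  have "continuous_map (subtopology (prod_topology TG Z) (pa_Gamma G D)) Z (\<lambda>(t, x). s t x)"
    using T by blast
  moreover have "continuous_map Z X j"
    using hm by (simp add: homeomorphic_maps_def)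
  ultimately have "continuous_map (subtopology (prod_topology TG X) (pa_Gamma G (\<lambda>t. j ` D t))) X
                     (j \<circ> (\<lambda>(t, x). s t x) \<circ> (\<lambda>(t, x). (t, k x)))"
    using continuous_map_conj_Gamma by (meson continuous_map_compose)
  then show "continuous_map (subtopology (prod_topology TG X) (pa_Gamma G (\<lambda>t. j ` D t))) X
               (\<lambda>(t, x). j (s t (k x)))"
    by (simp add: o_def split_def)
qed (simp_all add: conj_image_Int conj_action_compose openin_conj_Gamma)

lemma pa_LM_conjugate:
  assumes "L \<subseteq> topspace X" "M \<subseteq> topspace X"
  shows "pa_LM G (\<lambda>t. j ` D t) (\<lambda>t x. j (s t (k x))) L M = pa_LM G D s (k ` L) (k ` M)"
proof -
  have "x \<in> j ` D (inv\<^bsub>G\<^esub> t) \<and> j (s t (k x)) \<in> M \<longleftrightarrow> k x \<in> D (inv\<^bsub>G\<^esub> t) \<and> s t (k x) \<in> k ` M"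
    if x: "x \<in> L" and t: "t \<in> carrier G" for x t
  proof -
    have it: "inv\<^bsub>G\<^esub> t \<in> carrier G"
      using grp t by (simp add: group.inv_closed)
    have "x \<in> j ` D (inv\<^bsub>G\<^esub> t) \<longleftrightarrow> k x \<in> D (inv\<^bsub>G\<^esub> t)"
      using x assms(1) k_topspace jk mem_conj_dom[OF _ it] by (metis subsetD)
    moreover have "j (s t (k x)) \<in> M \<longleftrightarrow> s t (k x) \<in> k ` M" if "k x \<in> D (inv\<^bsub>G\<^esub> t)"
    proof -
      have "s t (k x) \<in> topspace Z"
        using pa_maps_dom[OF tpa grp t that] dom_subset[OF t] by blast
      then show ?thesis
        using assms(2) jk kj by (metis imageE image_eqI subsetD)
    qed
    ultimately show ?thesis
      by blast
  qed
  then show ?thesis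
    unfolding pa_LM_def by blast
qed

lemma all_compact_pairs_conjugate:
  "(\<forall>L M. compactin X L \<and> compactin X M \<longrightarrow> Q (pa_LM G (\<lambda>t. j ` D t) (\<lambda>t x. j (s t (k x))) L M))
     \<longleftrightarrow> (\<forall>L M. compactin Z L \<and> compactin Z M \<longrightarrow> Q (pa_LM G D s L M))"
proof -
  have cj: "continuous_map Z X j" and ck: "continuous_map X Z k"
    using hm by (simp_all add: homeomorphic_maps_def)
  have kj_image: "k ` j ` A = A" if "A \<subseteq> topspace Z" for A
    using that kj by (force simp: image_iff)
  show ?thesis
  proof (intro iffI allI impI)
    fix L M assume Q: "\<forall>L M. compactin X L \<and> compactin X M \<longrightarrow>
                          Q (pa_LM G (\<lambda>t. j ` D t) (\<lambda>t x. j (s t (k x))) L M)"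
      and LM: "compactin Z L \<and> compactin Z M"
    then have "compactin X (j ` L)" "compactin X (j ` M)"
      using image_compactin[OF _ cj] by blast+
    with Q have "Q (pa_LM G D s (k ` j ` L) (k ` j ` M))"
      using pa_LM_conjugate compactin_subset_topspace by metis
    then show "Q (pa_LM G D s L M)"
      using LM compactin_subset_topspace kj_image by metis
  next
    fix L M assume Q: "\<forall>L M. compactin Z L \<and> compactin Z M \<longrightarrow> Q (pa_LM G D s L M)"
      and LM: "compactin X L \<and> compactin X M"
    then have "Q (pa_LM G D s (k ` L) (k ` M))"
      using image_compactin[OF _ ck] by blast
    then show "Q (pa_LM G (\<lambda>t. j ` D t) (\<lambda>t x. j (s t (k x))) L M)"
      using LM compactin_subset_topspace pa_LM_conjugate by metis
  qed
qed

lemma pa_P1_conjugate_iff: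
  "pa_P1 G TG X (\<lambda>t. j ` D t) (\<lambda>t x. j (s t (k x))) \<longleftrightarrow> pa_P1 G TG Z D s"
  unfolding pa_P1_def by (rule all_compact_pairs_conjugate)

lemma pa_P2_conjugate_iff:
  "pa_P2 G TG X (\<lambda>t. j ` D t) (\<lambda>t x. j (s t (k x))) \<longleftrightarrow> pa_P2 G TG Z D s"
  unfolding pa_P2_def by (rule all_compact_pairs_conjugate)

end

lemma homeomorphic_copy_along_inj:
  fixes Z :: "'a topology" and f :: "'a \<Rightarrow> 'b"
  assumes "inj f"
  shows "\<exists>X. homeomorphic_maps Z X f (inv_into UNIV f)"
proof -
  define X where "X = pullback_topology (f ` topspace Z) (inv_into UNIV f) Z"
  have "continuous_map Z X f"
    unfolding X_def using assms by (intro continuous_map_pullback') (auto simp: o_def)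
  moreover have "continuous_map X Z (inv_into UNIV f)"
    using continuous_map_pullback[OF continuous_map_id, of "f ` topspace Z" "inv_into UNIV f"]
    unfolding X_def by simp
  moreover have "topspace X = f ` topspace Z"
    using assms by (auto simp: X_def topspace_pullback_topology)
  ultimately have "homeomorphic_maps Z X f (inv_into UNIV f)"
    using assms unfolding homeomorphic_maps_def by (auto simp: f_inv_into_f)
  then show ?thesis ..
qed

lemma inj_real_pair_to_real: "\<exists>f :: real \<times> real \<Rightarrow> real. inj f"
proof -
  obtain f :: "real \<times> real \<Rightarrow> real" where "bij_betw f (UNIV \<times> UNIV) UNIV"
    using card_of_ordIso[THEN iffD2, OF card_of_Times_same_infinite[OF infinite_UNIV_char_0]]
    by blast
  then show ?thesis
    using bij_betw_imp_inj_on by auto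
qed

lemma pa_conjugate_along_inj:
  fixes f :: "'z \<Rightarrow> 'x" and Z :: "'z topology"
  assumes "inj f" "group G" "topological_partial_action G TG Z D s"
  obtains X :: "'x topology" and D' s' where "X homeomorphic_space Z"
    "topological_partial_action G TG X D' s'"
    "pa_P1 G TG X D' s' \<longleftrightarrow> pa_P1 G TG Z D s" "pa_P2 G TG X D' s' \<longleftrightarrow> pa_P2 G TG Z D s"
proof -
  obtain X where hm: "homeomorphic_maps Z X f (inv_into UNIV f)"
    using homeomorphic_copy_along_inj[OF assms(1)] by blast
  then have "X homeomorphic_space Z"
    using homeomorphic_maps_sym homeomorphic_space_def by blast
  with hm assms(2,3) show thesis
    by (metis that topological_partial_action_conjugate pa_P1_conjugate_iff pa_P2_conjugate_iff)
qed

definition additive_group :: "'a::group_add monoid" where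
  "additive_group = \<lparr>carrier = UNIV, mult = (+), one = 0\<rparr>"

lemma additive_group_simps [simp]:
  "carrier additive_group = UNIV" "x \<otimes>\<^bsub>additive_group\<^esub> y = x + y" "\<one>\<^bsub>additive_group\<^esub> = 0"
  by (simp_all add: additive_group_def)

lemma group_additive_group: "group (additive_group :: 'a::group_add monoid)"
  by (rule groupI) (auto simp: add.assoc, metis left_minus)

lemma additive_group_inv [simp]: "inv\<^bsub>additive_group\<^esub> x = - (x :: 'a::group_add)"
  by (rule group.inv_equality[OF group_additive_group]) auto

lemma topological_group_additive_group:
  "topological_group (additive_group :: 'a::topological_group_add monoid) euclidean"
  unfolding topological_group_def
  by (simp add: group_additive_group split_def continuous_intros)

definition punctured_plane :: "(real \<times> real) topology" where
  "punctured_plane = subtopology euclidean (- {(0, 0)})"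

definition htrans_dom :: "real \<Rightarrow> (real \<times> real) set" where
  "htrans_dom t = {p. snd p \<noteq> 0 \<or> 0 < fst p * (fst p - t)}"

definition htrans :: "real \<Rightarrow> real \<times> real \<Rightarrow> real \<times> real" where
  "htrans t p = (fst p + t, snd p)"

lemma htrans_dom_subset: "htrans_dom t \<subseteq> - {(0, 0)}"
  by (auto simp: htrans_dom_def)

lemma open_htrans_dom: "open (htrans_dom t)"
proof -
  have "htrans_dom t = {p. snd p \<noteq> 0} \<union> {p. 0 < fst p * (fst p - t)}"
    by (auto simp: htrans_dom_def)
  then show ?thesis
    by (simp add: open_Un open_Collect_neq open_Collect_less continuous_intros)
qed

lemma lc_hausdorff_punctured_plane: "lc_hausdorff punctured_plane"
  unfolding lc_hausdorff_def punctured_plane_def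
proof
  show "locally_compact_space (subtopology euclidean (- {(0::real, 0::real)}))"
    by (rule locally_compact_space_open_subset) (auto simp: locally_compact_space_euclidean)
qed (simp add: Hausdorff_space_subtopology)

lemma compactin_punctured_plane: "compactin punctured_plane L \<longleftrightarrow> compact L \<and> L \<subseteq> - {(0, 0)}"
  by (simp add: punctured_plane_def compactin_subtopology)

lemma subtopology_punctured_plane_htrans_dom:
  "subtopology punctured_plane (htrans_dom t) = subtopology euclidean (htrans_dom t)"
  unfolding punctured_plane_def subtopology_subtopology
  using htrans_dom_subset by (simp add: Int_absorb1)

lemma homeomorphic_map_htrans:
  "homeomorphic_map (subtopology euclidean (htrans_dom (- t))) (subtopology euclidean (htrans_dom t)) (htrans t)"
proof -
  have "homeomorphic_maps euclidean euclidean (htrans t) (htrans (- t))"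
    unfolding homeomorphic_maps_def htrans_def by (auto intro!: continuous_intros)
  then have "homeomorphic_maps (subtopology euclidean (htrans_dom (- t)))
               (subtopology euclidean (htrans_dom t)) (htrans t) (htrans (- t))"
    by (rule homeomorphic_maps_subtopologies_alt)
      (auto simp: htrans_dom_def htrans_def algebra_simps)
  then show ?thesis
    using homeomorphic_map_maps by blast
qed

lemma htrans_image_htrans_dom_Int:
  "htrans a ` (htrans_dom (- a) \<inter> htrans_dom t) = htrans_dom a \<inter> htrans_dom (a + t)"
proof (intro equalityI subsetI)
  fix q assume "q \<in> htrans_dom a \<inter> htrans_dom (a + t)"
  then show "q \<in> htrans a ` (htrans_dom (- a) \<inter> htrans_dom t)"
    by (intro image_eqI[of q _ "htrans (- a) q"])
      (auto simp: htrans_dom_def htrans_def zero_less_mult_iff)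
qed (auto simp: htrans_dom_def htrans_def zero_less_mult_iff)

lemma open_pa_Gamma_htrans: "open (pa_Gamma additive_group htrans_dom)"
proof -
  have "pa_Gamma additive_group htrans_dom =
          {z. snd (snd z) \<noteq> 0} \<union> {z. 0 < fst (snd z) * (fst (snd z) + fst z)}"
    by (auto simp: pa_Gamma_def htrans_dom_def)
  then show ?thesis
    by (simp add: open_Un open_Collect_neq open_Collect_less continuous_intros)
qed

lemma pa_Gamma_htrans_subset: "pa_Gamma additive_group htrans_dom \<subseteq> UNIV \<times> - {(0, 0)}"
  using htrans_dom_subset by (auto simp: pa_Gamma_def)

lemma prod_topology_euclidean_punctured_plane:
  "prod_topology (euclidean :: real topology) punctured_plane = subtopology euclidean (UNIV \<times> - {(0, 0)})"
  unfolding punctured_plane_def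
  using subtopology_Times[of "euclidean :: real topology" euclidean UNIV "- {(0::real, 0::real)}"]
  by simp

lemma subtopology_pa_Gamma_htrans:
  "subtopology (prod_topology euclidean punctured_plane) (pa_Gamma additive_group htrans_dom)
     = subtopology euclidean (pa_Gamma additive_group htrans_dom)"
  unfolding prod_topology_euclidean_punctured_plane subtopology_subtopology
  using pa_Gamma_htrans_subset by (simp add: Int_absorb1)

lemma continuous_map_htrans:
  "continuous_map (subtopology euclidean (pa_Gamma additive_group htrans_dom)) punctured_plane
     (\<lambda>(t, x). htrans t x)"
  unfolding punctured_plane_def
proof (rule continuous_map_into_subtopology)
  show "continuous_map (subtopology euclidean (pa_Gamma additive_group htrans_dom)) euclidean
          (\<lambda>(t, x). htrans t x)"
    unfolding htrans_def split_def
    by (intro continuous_map_from_subtopology) (simp add: continuous_intros)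
  show "(\<lambda>(t, x). htrans t x) \<in> topspace (subtopology euclidean (pa_Gamma additive_group htrans_dom))
          \<rightarrow> - {(0, 0)}"
    by (auto simp: pa_Gamma_def htrans_dom_def htrans_def)
qed

lemma topological_partial_action_htrans:
  "topological_partial_action additive_group euclidean punctured_plane htrans_dom htrans"
  unfolding topological_partial_action_def
proof (intro conjI ballI)
  show "openin punctured_plane (htrans_dom t)" for t
    unfolding punctured_plane_def using open_htrans_dom htrans_dom_subset
    by (auto simp: openin_subtopology Int_absorb2)
  show "homeomorphic_map (subtopology punctured_plane (htrans_dom (inv\<^bsub>additive_group\<^esub> t)))
          (subtopology punctured_plane (htrans_dom t)) (htrans t)" for t
    by (simp add: subtopology_punctured_plane_htrans_dom homeomorphic_map_htrans)
  show "htrans_dom \<one>\<^bsub>additive_group\<^esub> = topspace punctured_plane"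
    by (auto simp: htrans_dom_def punctured_plane_def)
  show "htrans a ` (htrans_dom (inv\<^bsub>additive_group\<^esub> a) \<inter> htrans_dom t) =
          htrans_dom a \<inter> htrans_dom (a \<otimes>\<^bsub>additive_group\<^esub> t)" for a t
    by (simp add: htrans_image_htrans_dom_Int)
  show "openin (prod_topology euclidean punctured_plane) (pa_Gamma additive_group htrans_dom)"
    unfolding prod_topology_euclidean_punctured_plane openin_subtopology
    using open_pa_Gamma_htrans pa_Gamma_htrans_subset by auto
  show "continuous_map (subtopology (prod_topology euclidean punctured_plane)
          (pa_Gamma additive_group htrans_dom)) punctured_plane (\<lambda>(t, x). htrans t x)"
    by (simp add: subtopology_pa_Gamma_htrans continuous_map_htrans)
qed (simp_all add: htrans_def algebra_simps)

lemma htrans_P1: "pa_P1 additive_group euclidean punctured_plane htrans_dom htrans"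
  unfolding pa_P1_def
proof (intro allI impI)
  fix L M assume "compactin punctured_plane L \<and> compactin punctured_plane M"
  then have "compact ((\<lambda>(p, q). fst q - fst p) ` (L \<times> M))"
    by (intro compact_continuous_image compact_Times)
      (auto simp: compactin_punctured_plane split_def intro!: continuous_intros)
  moreover have "pa_LM additive_group htrans_dom htrans L M \<subseteq> (\<lambda>(p, q). fst q - fst p) ` (L \<times> M)"
    by (force simp: pa_LM_iff htrans_def)
  ultimately have "bounded (pa_LM additive_group htrans_dom htrans L M)"
    using bounded_subset compact_imp_bounded by blast
  then show "compactin euclidean (euclidean closure_of pa_LM additive_group htrans_dom htrans L M)"
    by simp
qed

lemma pa_LM_htrans_diagonal:
  "pa_LM additive_group htrans_dom htrans ({-1} \<times> {0..1}) ((\<lambda>y. (1 + y, y)) ` {0..1}) = {2<..3}"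
proof (intro equalityI subsetI)
  fix t assume "t \<in> pa_LM additive_group htrans_dom htrans ({-1} \<times> {0..1}) ((\<lambda>y. (1 + y, y)) ` {0..1})"
  then obtain p where p: "p \<in> ({-1} \<times> {0..1}) \<inter> htrans_dom (- t)"
    and "htrans t p \<in> (\<lambda>y. (1 + y, y)) ` {0..1}"
    unfolding pa_LM_iff by (auto elim: bexE)
  moreover obtain y where y: "p = (-1, y)" "y \<in> {0..1}"
    using p by auto
  ultimately have "t = 2 + y"
    by (auto simp: htrans_def)
  with p y show "t \<in> {2<..3}"
    by (auto simp: htrans_dom_def)
next
  fix t :: real assume t: "t \<in> {2<..3}"
  then have "(-1, t - 2) \<in> ({-1} \<times> {0..1}) \<inter> htrans_dom (- t)"
    and "htrans t (-1, t - 2) \<in> (\<lambda>y. (1 + y, y)) ` {0..1}"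
    by (auto simp: htrans_dom_def htrans_def image_iff)
  then show "t \<in> pa_LM additive_group htrans_dom htrans ({-1} \<times> {0..1}) ((\<lambda>y. (1 + y, y)) ` {0..1})"
    unfolding pa_LM_iff by auto
qed

lemma htrans_not_P2: "\<not> pa_P2 additive_group euclidean punctured_plane htrans_dom htrans"
proof
  assume "pa_P2 additive_group euclidean punctured_plane htrans_dom htrans"
  moreover have "compactin punctured_plane ({-1} \<times> {0..1})"
    by (auto simp: compactin_punctured_plane intro: compact_Times)
  moreover have "compactin punctured_plane ((\<lambda>y. (1 + y, y)) ` {0..1})"
    unfolding compactin_punctured_plane
  proof
    show "compact ((\<lambda>y. (1 + y, y)) ` {0..1::real})"
      by (rule compact_continuous_image) (auto intro!: continuous_intros)
  qed auto
  ultimately have "compact {2<..(3::real)}"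
    unfolding pa_P2_def by (metis pa_LM_htrans_diagonal compactin_euclidean_iff)
  then show False
    using not_compact_greaterThanAtMost[of "2::real" 3] by simp
qed

definition sign_group :: "real monoid" where
  "sign_group = \<lparr>carrier = {-1, 1}, mult = (*), one = 1\<rparr>"

lemma sign_group_simps [simp]:
  "carrier sign_group = {-1, 1}" "x \<otimes>\<^bsub>sign_group\<^esub> y = x * y" "\<one>\<^bsub>sign_group\<^esub> = 1"
  by (simp_all add: sign_group_def)

lemma group_sign_group: "group sign_group"
  by (rule groupI) (auto intro: exI[of _ "-1"] exI[of _ 1])

lemma sign_group_inv [simp]: "t \<in> {-1, 1} \<Longrightarrow> inv\<^bsub>sign_group\<^esub> t = t"
  by (rule group.inv_equality[OF group_sign_group]) auto

lemma topological_group_sign_group: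
  "topological_group sign_group (discrete_topology {-1, 1})"
  unfolding topological_group_def
  using group_sign_group by (auto simp flip: prod_topology_discrete_topology)

definition reflection_dom :: "real \<Rightarrow> real set" where
  "reflection_dom t = (if t = 1 then UNIV else - {0})"

lemma reflection_dom_Int_eq:
  assumes "a \<in> {-1, 1}" "t \<in> {-1, 1}"
  shows "reflection_dom a \<inter> reflection_dom t = reflection_dom a \<inter> reflection_dom (a * t)"
  using assms by (auto simp: reflection_dom_def)

lemma times_sign_image_reflection_dom:
  assumes "a \<in> {-1, 1}"
  shows "(*) a ` (reflection_dom b \<inter> reflection_dom c) = reflection_dom b \<inter> reflection_dom c"
proof (intro equalityI subsetI)
  fix y assume "y \<in> reflection_dom b \<inter> reflection_dom c"
  with assms show "y \<in> (*) a ` (reflection_dom b \<inter> reflection_dom c)"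
    by (intro image_eqI[of y _ "a * y"]) (auto simp: reflection_dom_def)
qed (use assms in \<open>auto simp: reflection_dom_def\<close>)

lemma homeomorphic_map_times_sign:
  assumes t: "t \<in> {-1, 1}"
  shows "homeomorphic_map (subtopology euclidean (reflection_dom t)) (subtopology euclidean (reflection_dom t))
           ((*) t)"
proof -
  have "homeomorphic_maps euclidean euclidean ((*) t) ((*) t)"
    using t by (auto simp: homeomorphic_maps_def continuous_map_real_mult)
  moreover have "(*) t ` (topspace euclidean \<inter> reflection_dom t) = topspace euclidean \<inter> reflection_dom t"
    using t times_sign_image_reflection_dom[of t t t] by simp
  ultimately have "homeomorphic_maps (subtopology euclidean (reflection_dom t))
                     (subtopology euclidean (reflection_dom t)) ((*) t) ((*) t)"
    by (rule homeomorphic_maps_subtopologies)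
  then show ?thesis
    using homeomorphic_map_maps by blast
qed

lemma continuous_map_sign_action:
  "continuous_map (prod_topology (discrete_topology {-1, 1}) euclideanreal) euclideanreal (\<lambda>(t, x). t * x)"
proof -
  have "continuous_map (discrete_topology {-1, 1}) euclideanreal id"
    by simp
  then have "continuous_map (prod_topology (discrete_topology {-1, 1}) euclideanreal) euclideanreal fst"
    by (metis continuous_map_compose continuous_map_fst id_comp)
  then show ?thesis
    unfolding split_def by (rule continuous_map_real_mult[OF _ continuous_map_snd])
qed

lemma topological_partial_action_reflection:
  "topological_partial_action sign_group (discrete_topology {-1, 1}) euclidean reflection_dom (*)"
  unfolding topological_partial_action_def
proof (intro conjI ballI)
  show "openin euclidean (reflection_dom t)" for t
    by (simp add: reflection_dom_def open_Compl)
  show "homeomorphic_map (subtopology euclidean (reflection_dom (inv\<^bsub>sign_group\<^esub> t)))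
          (subtopology euclidean (reflection_dom t)) ((*) t)" if "t \<in> carrier sign_group" for t
    using that homeomorphic_map_times_sign by simp
  show "(*) a ` (reflection_dom (inv\<^bsub>sign_group\<^esub> a) \<inter> reflection_dom t) =
          reflection_dom a \<inter> reflection_dom (a \<otimes>\<^bsub>sign_group\<^esub> t)"
    if "a \<in> carrier sign_group" "t \<in> carrier sign_group" for a t
    using that by (simp add: times_sign_image_reflection_dom reflection_dom_Int_eq)
  have "pa_Gamma sign_group reflection_dom = {1} \<times> UNIV \<union> {-1} \<times> - {0}"
    by (auto simp: pa_Gamma_def reflection_dom_def)
  then show "openin (prod_topology (discrete_topology {-1, 1}) euclidean) (pa_Gamma sign_group reflection_dom)"
    by (auto intro!: openin_Un simp: openin_prod_Times_iff)
  show "continuous_map (subtopology (prod_topology (discrete_topology {-1, 1}) euclidean)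
          (pa_Gamma sign_group reflection_dom)) euclidean (\<lambda>(t, x). t * x)"
    using continuous_map_sign_action by (rule continuous_map_from_subtopology)
qed (simp_all add: reflection_dom_def)

lemma reflection_P2: "pa_P2 sign_group (discrete_topology {-1, 1}) euclidean reflection_dom (*)"
  unfolding pa_P2_def pa_LM_def compactin_discrete_topology
  by (auto intro: finite_subset[of _ "{-1, 1}"])

lemma reflection_not_P3: "\<not> pa_P3 sign_group (discrete_topology {-1, 1}) euclidean reflection_dom (*)"
proof
  assume "pa_P3 sign_group (discrete_topology {-1, 1}) euclidean reflection_dom (*)"
  then have "compactin euclidean {x \<in> {0..1} \<inter> reflection_dom (inv\<^bsub>sign_group\<^esub> (-1)). -1 * x \<in> {-1..0}}"
    by (intro pa_P3_imp_compactin_slice) auto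
  moreover have "{x \<in> {0..1} \<inter> reflection_dom (inv\<^bsub>sign_group\<^esub> (-1)). -1 * x \<in> {-1..0}} = {0<..(1::real)}"
    by (auto simp: reflection_dom_def)
  ultimately show False
    using not_compact_greaterThanAtMost[of "0::real" 1] by simp
qed

theorem proposition1p3:
  shows "(\<forall>(G :: ('g, 'm) monoid_scheme) (TG :: 'g topology) (X :: 'x topology) D s.
            topological_group G TG \<and> lc_hausdorff TG \<and> lc_hausdorff X \<and>
            topological_partial_action G TG X D s \<longrightarrow>
            (pa_P3 G TG X D s \<longrightarrow> pa_P2 G TG X D s) \<and>
            (pa_P2 G TG X D s \<longrightarrow> pa_P1 G TG X D s)) \<and>
         (\<exists>(G :: real monoid) (TG :: real topology) (X :: real topology) D s.
            topological_group G TG \<and> lc_hausdorff TG \<and> lc_hausdorff X \<and>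
            topological_partial_action G TG X D s \<and>
            pa_P1 G TG X D s \<and> \<not> pa_P2 G TG X D s) \<and>
         (\<exists>(G :: real monoid) (TG :: real topology) (X :: real topology) D s.
            topological_group G TG \<and> lc_hausdorff TG \<and> lc_hausdorff X \<and>
            topological_partial_action G TG X D s \<and>
            pa_P2 G TG X D s \<and> \<not> pa_P3 G TG X D s)"
proof (intro conjI)
  show "\<forall>(G :: ('g, 'm) monoid_scheme) (TG :: 'g topology) (X :: 'x topology) D s.
          topological_group G TG \<and> lc_hausdorff TG \<and> lc_hausdorff X \<and>
          topological_partial_action G TG X D s \<longrightarrow>
          (pa_P3 G TG X D s \<longrightarrow> pa_P2 G TG X D s) \<and> (pa_P2 G TG X D s \<longrightarrow> pa_P1 G TG X D s)"
    by (auto simp: topological_group_def lc_hausdorff_def intro: pa_P3_imp_P2 pa_P2_imp_P1)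
  obtain f :: "real \<times> real \<Rightarrow> real" where "inj f"
    using inj_real_pair_to_real by blast
  then obtain X :: "real topology" and D :: "real \<Rightarrow> real set" and s
    where "X homeomorphic_space punctured_plane"
    and "topological_partial_action additive_group euclidean X D s"
    and "pa_P1 additive_group euclidean X D s \<longleftrightarrow>
           pa_P1 additive_group euclidean punctured_plane htrans_dom htrans"
    and "pa_P2 additive_group euclidean X D s \<longleftrightarrow>
           pa_P2 additive_group euclidean punctured_plane htrans_dom htrans"
    by (rule pa_conjugate_along_inj[OF _ group_additive_group topological_partial_action_htrans])
  then show "\<exists>(G :: real monoid) (TG :: real topology) (X :: real topology) D s.
          topological_group G TG \<and> lc_hausdorff TG \<and> lc_hausdorff X \<and>
          topological_partial_action G TG X D s \<and> pa_P1 G TG X D s \<and> \<not> pa_P2 G TG X D s"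
    using topological_group_additive_group lc_hausdorff_euclidean lc_hausdorff_punctured_plane
      lc_hausdorff_homeomorphic_space htrans_P1 htrans_not_P2 by blast
  show "\<exists>(G :: real monoid) (TG :: real topology) (X :: real topology) D s.
          topological_group G TG \<and> lc_hausdorff TG \<and> lc_hausdorff X \<and>
          topological_partial_action G TG X D s \<and> pa_P2 G TG X D s \<and> \<not> pa_P3 G TG X D s"
    using topological_group_sign_group lc_hausdorff_discrete_topology lc_hausdorff_euclidean
      topological_partial_action_reflection reflection_P2 reflection_not_P3 by blast
qed

end
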